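(* Let $\epsilon>0$ and $n,m\ge1$. Write elements of $\mathbb{R}^{n\cdot m}$ as $u=[u_1,\dots,u_n]$ with $u_i\in\mathbb{R}^m$, and equip $\mathbb{R}^{n\cdot m}$ with the norm $\|u\|=\sum_{i=1}^n\|u_i\|_2$. Consider mechanisms $Q:\mathbb{R}^{n\cdot m}\to\Delta(\mathbb{R}^{n\cdot m})$ of the form $Qu=u+V$, where the noise $V$ has distribution $g\in\Delta(\mathbb{R}^{n\cdot m})$ independent of the input $u$, and suppose $Q$ is $\epsilon$-Lipschitz private with respect to this norm. Then $$\mathbb{E}_{V\sim g}\|V\|_2^2\;\ge\;\mathbb{E}_{V\sim l^{n,m}}\|V\|_2^2=\frac{nm(m+1)}{\epsilon^2},$$ where $l^{n,m}$ is the probability density on $\mathbb{R}^{n\cdot m}$ proportional to $e^{-\epsilon\sum_{i=1}^n\|v_i\|_2}$; i.e. the mechanism adding noise with density $l^{n,m}$ minimizes the mean-squared error for the identity query among all such mechanisms.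
   Context: $\Delta(\mathcal{Y})$ denotes the set of Borel probability measures on $\mathcal{Y}$. For a normed space $(\mathcal{U},\|\cdot\|)$, a mechanism $Q:\mathcal{U}\to\Delta(\mathcal{Y})$ is $\epsilon$-Lipschitz private if for all $u,u'\in\mathcal{U}$ and all measurable $\mathcal{S}\subseteq\mathcal{Y}$, $|\ln\mathbb{P}(Qu\in\mathcal{S})-\ln\mathbb{P}(Qu'\in\mathcal{S})|\le\epsilon\|u-u'\|$, equivalently $\mathbb{P}(Qu\in\mathcal{S})\le e^{\epsilon\|u-u'\|}\mathbb{P}(Qu'\in\mathcal{S})$. Here $\|V\|_2$ is the Euclidean norm of $V$ viewed as a vector in $\mathbb{R}^{n\cdot m}$. *)

theory Defs
  imports "HOL-Probability.Probability"
begin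

definition blocknorm :: "real^'m^'n \<Rightarrow> real" where
  "blocknorm u = (\<Sum>i\<in>UNIV. norm (u $ i))"

definition additive_mech :: "'a::euclidean_space measure \<Rightarrow> 'a \<Rightarrow> 'a measure" where
  "additive_mech g u = distr g borel (\<lambda>v. u + v)"

definition lipschitz_private ::
  "real \<Rightarrow> ('a::ab_group_add \<Rightarrow> real) \<Rightarrow> ('a \<Rightarrow> 'b::topological_space measure) \<Rightarrow> bool" where
  "lipschitz_private \<epsilon> N Q \<longleftrightarrow>
     (\<forall>u u'. \<forall>S\<in>sets borel. measure (Q u) S \<le> exp (\<epsilon> * N (u - u')) * measure (Q u') S)"

definition lap_density :: "real \<Rightarrow> real^'m^'n \<Rightarrow> real" where
  "lap_density \<epsilon> v = exp (- \<epsilon> * blocknorm v) /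
      (\<integral>(w::real^'m^'n). exp (- \<epsilon> * blocknorm w) \<partial>lborel)"

end

theory Submission
  imports Defs
begin

text \<open>
  For a nonnegative function \<open>\<Phi>\<close> on \<open>(\<real>\<^sup>m)\<^sup>n\<close>, stretching the \<open>i\<close>-th block by \<open>l\<close> rescales
  Lebesgue measure by \<open>l\<^sup>m\<close> and the block moment \<open>\<integral> \<Phi> |x\<^sub>i|\<^sup>k\<close> by \<open>l\<^sup>m\<^sup>+\<^sup>k\<close>. If \<open>\<Phi>\<close> loses at most a
  factor \<open>exp (-\<epsilon> (l - 1) |x\<^sub>i|)\<close> under such a stretch, differentiating at \<open>l = 1\<close> gives
  \<open>(m + k) M\<^sub>k \<le> \<epsilon> M\<^sub>k\<^sub>+\<^sub>1\<close> for its block moments \<open>M\<^sub>k\<close>; for the Laplace-type density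
  \<open>exp (-\<epsilon> \<parallel>v\<parallel>)\<close> the loss is exact and equality holds, which computes its second moment.
  For a private noise law \<open>g\<close>, Lipschitz privacy makes \<open>x \<mapsto> g (ball x \<delta>)\<close> such a function,
  whose block moments approximate \<open>vol (ball 0 \<delta>)\<close> times those of \<open>g\<close>. Hence
  \<open>m \<le> \<epsilon> E|V\<^sub>i|\<close> and \<open>(m + 1) E|V\<^sub>i| \<le> \<epsilon> E|V\<^sub>i|\<^sup>2\<close>, so \<open>E|V\<^sub>i|\<^sup>2 \<ge> m (m + 1) / \<epsilon>\<^sup>2\<close>; summing over the
  \<open>n\<close> blocks gives the bound, attained by the Laplace-type density.
\<close>

section \<open>Stretching one block\<close>

definition scale_block :: "'n \<Rightarrow> real \<Rightarrow> real^'m^'n \<Rightarrow> real^'m^'n" where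
  "scale_block i l x = (\<chi> k. if k = i then l *\<^sub>R x $ k else x $ k)"

definition block_moment :: "(real^'m^'n \<Rightarrow> real) \<Rightarrow> 'n \<Rightarrow> nat \<Rightarrow> ennreal" where
  "block_moment \<Phi> i k = (\<integral>\<^sup>+x. ennreal (\<Phi> x * norm (x $ i) ^ k) \<partial>lborel)"

lemma scale_block_nth: "scale_block i l x $ k = (if k = i then l *\<^sub>R x $ k else x $ k)"
  by (simp add: scale_block_def)

lemma scale_block_eq_sum_Basis:
  fixes i :: "'n::finite" and x :: "real^'m::finite^'n"
  shows "scale_block i l x = (\<Sum>j\<in>Basis. ((if j $ i \<noteq> 0 then l else 1) * (x \<bullet> j)) *\<^sub>R j)"
proof -
  have "scale_block i l x = (\<Sum>j\<in>Basis. (scale_block i l x \<bullet> j) *\<^sub>R j)"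
    by (simp add: euclidean_representation)
  also have "\<dots> = (\<Sum>j\<in>Basis. ((if j $ i \<noteq> 0 then l else 1) * (x \<bullet> j)) *\<^sub>R j)"
  proof (rule sum.cong[OF refl])
    fix j :: "real^'m^'n" assume "j \<in> Basis"
    then obtain k u where j: "j = axis k u" and u: "u \<in> Basis" unfolding Basis_vec_def by auto
    have "u \<noteq> 0" using u by auto
    moreover have "axis k u $ i = (if i = k then u else 0)" by (simp add: axis_def)
    ultimately show "(scale_block i l x \<bullet> j) *\<^sub>R j = ((if j $ i \<noteq> 0 then l else 1) * (x \<bullet> j)) *\<^sub>R j"
      by (cases "k = i") (auto simp: j inner_axis scale_block_nth)
  qed
  finally show ?thesis .
qed

lemma card_Basis_block:
  fixes i :: "'n::finite"
  shows "card {j\<in>(Basis :: (real^'m::finite^'n) set). j $ i \<noteq> 0} = CARD('m)"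
proof -
  have "{j\<in>(Basis :: (real^'m^'n) set). j $ i \<noteq> 0} = axis i ` (Basis :: (real^'m) set)"
  proof (intro set_eqI iffI)
    fix j assume "j \<in> {j\<in>(Basis :: (real^'m^'n) set). j $ i \<noteq> 0}"
    then obtain k u where "u \<in> (Basis :: (real^'m) set)" "j = axis k u" "j $ i \<noteq> 0"
      by (auto simp: Basis_vec_def)
    then show "j \<in> axis i ` (Basis :: (real^'m) set)"
      by (cases "k = i") (auto simp: axis_def)
  qed (auto simp: Basis_vec_def axis_nth)
  moreover have "inj_on (axis i :: real^'m \<Rightarrow> real^'m^'n) Basis"
    by (auto simp: inj_on_def axis_eq_axis)
  ultimately show ?thesis by (simp add: card_image)
qed

lemma measurable_scale_block [measurable]: "scale_block i l \<in> borel_measurable borel"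
  unfolding scale_block_eq_sum_Basis by measurable

lemma nn_integral_lborel_scale_block:
  fixes f :: "real^'m::finite^'n::finite \<Rightarrow> ennreal" and i :: 'n
  assumes "l > 0" and [measurable]: "f \<in> borel_measurable borel"
  shows "(\<integral>\<^sup>+x. f x \<partial>lborel) = ennreal (l ^ CARD('m)) * (\<integral>\<^sup>+x. f (scale_block i l x) \<partial>lborel)"
proof -
  let ?c = "\<lambda>j::real^'m^'n. if j $ i \<noteq> 0 then l else 1"
  have "(\<Prod>j\<in>Basis. \<bar>?c j\<bar>) = (\<Prod>j\<in>Basis. ?c j)"
    using assms by (intro prod.cong) auto
  also have "\<dots> = l ^ CARD('m)"
    by (simp add: prod.If_cases Int_def card_Basis_block)
  finally have det: "(\<Prod>j\<in>Basis. \<bar>?c j\<bar>) = l ^ CARD('m)" .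
  have "lborel = density (distr lborel borel (\<lambda>x. 0 + (\<Sum>j\<in>Basis. (?c j * (x \<bullet> j)) *\<^sub>R j)))
      (\<lambda>_. (\<Prod>j\<in>Basis. \<bar>?c j\<bar>))"
    using assms by (intro lborel_affine_euclidean) auto
  also have "\<dots> = density (distr lborel borel (scale_block i l)) (\<lambda>_. ennreal (l ^ CARD('m)))"
    by (simp add: det scale_block_eq_sum_Basis[symmetric, abs_def])
  finally have lborel_eq: "lborel = \<dots>" .
  show ?thesis
    by (subst lborel_eq) (simp add: nn_integral_density nn_integral_distr nn_integral_cmult)
qed

lemma measurable_vec_nth [measurable]:
  "(\<lambda>x::'a::real_normed_vector^'n::finite. x $ i) \<in> borel_measurable borel"
  by (intro borel_measurable_continuous_onI continuous_on_component continuous_on_id)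

lemma block_moment_ge_scaled:
  fixes \<Phi> :: "real^'m::finite^'n::finite \<Rightarrow> real"
  assumes l: "l > 0" and [measurable]: "\<Phi> \<in> borel_measurable borel" and nn: "\<And>x. \<Phi> x \<ge> 0"
    and sc: "\<And>x. \<Phi> (scale_block i l x) \<ge> exp (- (\<epsilon> * (l - 1) * norm (x $ i))) * \<Phi> x"
  shows "block_moment \<Phi> i k \<ge> ennreal (l ^ (CARD('m) + k)) *
      (\<integral>\<^sup>+x. ennreal (exp (- (\<epsilon> * (l - 1) * norm (x $ i))) * \<Phi> x * norm (x $ i) ^ k) \<partial>lborel)"
proof -
  let ?S = "\<integral>\<^sup>+x. ennreal (\<Phi> (scale_block i l x) * norm (x $ i) ^ k) \<partial>lborel"
  have "block_moment \<Phi> i k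
     = ennreal (l ^ CARD('m)) * (\<integral>\<^sup>+x. ennreal (\<Phi> (scale_block i l x) * norm (scale_block i l x $ i) ^ k) \<partial>lborel)"
    unfolding block_moment_def by (rule nn_integral_lborel_scale_block[OF l]) measurable
  also have "\<dots> = ennreal (l ^ CARD('m)) * (\<integral>\<^sup>+x. ennreal (l ^ k) * ennreal (\<Phi> (scale_block i l x) * norm (x $ i) ^ k) \<partial>lborel)"
    using l nn by (intro arg_cong2[where f="(*)"] refl nn_integral_cong)
       (auto simp: scale_block_nth power_mult_distrib ennreal_mult'[symmetric] mult_ac)
  also have "\<dots> = ennreal (l ^ CARD('m)) * (ennreal (l ^ k) * ?S)"
    by (subst nn_integral_cmult) auto
  also have "\<dots> = ennreal (l ^ (CARD('m) + k)) * ?S"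
    using l by (simp add: power_add ennreal_mult mult.assoc)
  finally have "block_moment \<Phi> i k = ennreal (l ^ (CARD('m) + k)) * ?S" .
  moreover have "?S \<ge> (\<integral>\<^sup>+x. ennreal (exp (- (\<epsilon> * (l - 1) * norm (x $ i))) * \<Phi> x * norm (x $ i) ^ k) \<partial>lborel)"
    by (intro nn_integral_mono ennreal_leI mult_right_mono sc) auto
  ultimately show ?thesis by (auto intro: mult_left_mono)
qed

text \<open>\<open>e\<^sup>-\<^sup>t \<ge> 1 - t\<close> turns the exponential loss factor into a linear one.\<close>

lemma block_moment_le_scaled:
  fixes \<Phi> :: "real^'m::finite^'n::finite \<Rightarrow> real"
  assumes l: "l > 1" and e: "\<epsilon> > 0" and [measurable]: "\<Phi> \<in> borel_measurable borel"
    and nn: "\<And>x. \<Phi> x \<ge> 0"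
    and sc: "\<And>x. \<Phi> (scale_block i l x) \<ge> exp (- (\<epsilon> * (l - 1) * norm (x $ i))) * \<Phi> x"
  shows "block_moment \<Phi> i k \<le> ennreal (1 / l ^ (CARD('m) + k)) * block_moment \<Phi> i k
      + ennreal (\<epsilon> * (l - 1)) * block_moment \<Phi> i (Suc k)"
proof -
  let ?E = "\<lambda>x. exp (- (\<epsilon> * (l - 1) * norm (x $ i)))"
  let ?K = "\<integral>\<^sup>+x. ennreal (?E x * \<Phi> x * norm (x $ i) ^ k) \<partial>lborel"
  let ?J = "block_moment \<Phi> i"
  have "ennreal (1 / l ^ (CARD('m) + k)) * ?J k \<ge> ennreal (1 / l ^ (CARD('m) + k)) * (ennreal (l ^ (CARD('m) + k)) * ?K)"
    by (intro mult_left_mono block_moment_ge_scaled) (use l nn sc in auto)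
  also have "ennreal (1 / l ^ (CARD('m) + k)) * (ennreal (l ^ (CARD('m) + k)) * ?K) = ?K"
    using l by (simp add: mult.assoc[symmetric] ennreal_mult'[symmetric])
  finally have K: "?K \<le> ennreal (1 / l ^ (CARD('m) + k)) * ?J k" .
  have "?J k \<le> (\<integral>\<^sup>+x. ennreal (?E x * \<Phi> x * norm (x $ i) ^ k) + ennreal (\<epsilon> * (l - 1)) * ennreal (\<Phi> x * norm (x $ i) ^ Suc k) \<partial>lborel)"
    unfolding block_moment_def
  proof (intro nn_integral_mono)
    fix x :: "real^'m^'n"
    have t: "1 \<le> ?E x + \<epsilon> * (l - 1) * norm (x $ i)"
      using exp_ge_add_one_self[of "- (\<epsilon> * (l - 1) * norm (x $ i))"] by linarith
    have "\<Phi> x * norm (x $ i) ^ k \<le> (?E x + \<epsilon> * (l - 1) * norm (x $ i)) * (\<Phi> x * norm (x $ i) ^ k)"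
      using mult_right_mono[OF t, of "\<Phi> x * norm (x $ i) ^ k"] nn by simp
    also have "\<dots> = ?E x * \<Phi> x * norm (x $ i) ^ k + \<epsilon> * (l - 1) * (\<Phi> x * norm (x $ i) ^ Suc k)"
      by (simp add: algebra_simps)
    finally show "ennreal (\<Phi> x * norm (x $ i) ^ k) \<le> ennreal (?E x * \<Phi> x * norm (x $ i) ^ k) + ennreal (\<epsilon> * (l - 1)) * ennreal (\<Phi> x * norm (x $ i) ^ Suc k)"
      using l e nn by (simp add: ennreal_mult'[symmetric] ennreal_plus[symmetric] del: ennreal_plus)
  qed
  also have "\<dots> = ?K + ennreal (\<epsilon> * (l - 1)) * ?J (Suc k)"
    unfolding block_moment_def by (subst nn_integral_add) (auto simp: nn_integral_cmult)
  also have "\<dots> \<le> ennreal (1 / l ^ (CARD('m) + k)) * ?J k + ennreal (\<epsilon> * (l - 1)) * ?J (Suc k)"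
    using K by (rule add_right_mono)
  finally show ?thesis .
qed

lemma block_moment_ge_scaled_sum:
  fixes \<Phi> :: "real^'m::finite^'n::finite \<Rightarrow> real"
  assumes l: "0 < l" "l < 1" and e: "\<epsilon> > 0" and [measurable]: "\<Phi> \<in> borel_measurable borel"
    and nn: "\<And>x. \<Phi> x \<ge> 0"
    and sc: "\<And>x. \<Phi> (scale_block i l x) \<ge> exp (- (\<epsilon> * (l - 1) * norm (x $ i))) * \<Phi> x"
  shows "block_moment \<Phi> i k \<ge> ennreal (l ^ (CARD('m) + k)) *
      (block_moment \<Phi> i k + ennreal (\<epsilon> * (1 - l)) * block_moment \<Phi> i (Suc k))"
proof -
  let ?E = "\<lambda>x. exp (- (\<epsilon> * (l - 1) * norm (x $ i)))"
  let ?K = "\<integral>\<^sup>+x. ennreal (?E x * \<Phi> x * norm (x $ i) ^ k) \<partial>lborel"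
  let ?J = "block_moment \<Phi> i"
  have "?J k + ennreal (\<epsilon> * (1 - l)) * ?J (Suc k) = (\<integral>\<^sup>+x. ennreal (\<Phi> x * norm (x $ i) ^ k) + ennreal (\<epsilon> * (1 - l)) * ennreal (\<Phi> x * norm (x $ i) ^ Suc k) \<partial>lborel)"
    unfolding block_moment_def by (subst nn_integral_add) (auto simp: nn_integral_cmult)
  also have "\<dots> \<le> ?K"
  proof (intro nn_integral_mono)
    fix x :: "real^'m^'n"
    have t: "1 + \<epsilon> * (1 - l) * norm (x $ i) \<le> ?E x"
      using exp_ge_add_one_self[of "- (\<epsilon> * (l - 1) * norm (x $ i))"] by (simp add: algebra_simps)
    have "\<Phi> x * norm (x $ i) ^ k + \<epsilon> * (1 - l) * (\<Phi> x * norm (x $ i) ^ Suc k) = (1 + \<epsilon> * (1 - l) * norm (x $ i)) * (\<Phi> x * norm (x $ i) ^ k)"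
      by (simp add: algebra_simps)
    also have "\<dots> \<le> ?E x * (\<Phi> x * norm (x $ i) ^ k)"
      using mult_right_mono[OF t, of "\<Phi> x * norm (x $ i) ^ k"] nn by simp
    finally show "ennreal (\<Phi> x * norm (x $ i) ^ k) + ennreal (\<epsilon> * (1 - l)) * ennreal (\<Phi> x * norm (x $ i) ^ Suc k) \<le> ennreal (?E x * \<Phi> x * norm (x $ i) ^ k)"
      using l e nn by (simp add: ennreal_mult'[symmetric] ennreal_plus[symmetric] mult.assoc del: ennreal_plus)
  qed
  finally have "?J k + ennreal (\<epsilon> * (1 - l)) * ?J (Suc k) \<le> ?K" .
  moreover have "?J k \<ge> ennreal (l ^ (CARD('m) + k)) * ?K"
    by (rule block_moment_ge_scaled) (use l nn sc in auto)
  ultimately show ?thesis by (meson mult_left_mono order_trans zero_le)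
qed

text \<open>The one-sided derivatives of \<open>c / l\<^sup>p\<close> and \<open>l\<^sup>p\<close> at \<open>l = 1\<close>, via Bernoulli's inequality.\<close>

lemma power_perturbation_le:
  fixes c d :: real
  assumes c: "c \<ge> 0" and H: "\<And>l. l > 1 \<Longrightarrow> c \<le> c / l ^ p + d * (l - 1)"
  shows "real p * c \<le> d"
proof -
  have A: "real p * c \<le> d * l ^ p" if l: "l > 1" for l
  proof -
    have lp: "l ^ p > 0" using l by simp
    have "c * l ^ p \<le> (c / l ^ p + d * (l - 1)) * l ^ p"
      using H[OF l] lp by (intro mult_right_mono) auto
    also have "\<dots> = c + d * (l - 1) * l ^ p" using lp l by (simp add: field_simps)
    finally have 1: "c * l ^ p \<le> c + d * (l - 1) * l ^ p" .
    have "1 + real p * (l - 1) \<le> (1 + (l - 1)) ^ p"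
      by (rule Bernoulli_inequality) (use l in auto)
    then have "c * (1 + real p * (l - 1)) \<le> c * l ^ p" using c by (intro mult_left_mono) auto
    with 1 have "(real p * c) * (l - 1) \<le> (d * l ^ p) * (l - 1)" by (simp add: algebra_simps)
    then show ?thesis using l by simp
  qed
  have "((\<lambda>l. d * l ^ p) \<longlongrightarrow> d * 1 ^ p) (at_right 1)"
    by (intro tendsto_intros)
  then have T: "((\<lambda>l. d * l ^ p) \<longlongrightarrow> d) (at_right 1)" by simp
  show ?thesis
    by (rule tendsto_le[OF trivial_limit_at_right_real T tendsto_const])
       (rule eventually_mono[OF eventually_at_right_less], rule A)
qed

lemma power_perturbation_ge:
  fixes c d :: real
  assumes c: "c \<ge> 0" and d: "d \<ge> 0" and H: "\<And>l. 0 < l \<Longrightarrow> l < 1 \<Longrightarrow> l ^ p * (c + d * (1 - l)) \<le> c"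
  shows "d \<le> real p * c"
proof -
  have A: "d \<le> real p * c + real p * h * d" if h: "0 < h" "h < 1" for h
  proof -
    have "1 + real p * (-h) \<le> (1 + (-h)) ^ p"
      by (rule Bernoulli_inequality) (use h in auto)
    then have "(1 - real p * h) * (c + d * h) \<le> (1 - h) ^ p * (c + d * h)"
      using c d h by (intro mult_right_mono) auto
    also have "\<dots> \<le> c" using H[of "1 - h"] h by simp
    finally have "(1 - real p * h) * (c + d * h) \<le> c" .
    then have "h * d \<le> h * (real p * c + real p * h * d)" by (simp add: algebra_simps)
    then show ?thesis using h by simp
  qed
  have "((\<lambda>h. real p * c + real p * h * d) \<longlongrightarrow> real p * c + real p * 0 * d) (at_right 0)"
    by (intro tendsto_intros)
  then have T: "((\<lambda>h. real p * c + real p * h * d) \<longlongrightarrow> real p * c) (at_right 0)" by simp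
  have ev: "eventually (\<lambda>h::real. 0 < h \<and> h < 1) (at_right 0)"
    by (simp add: eventually_at_right_less eventually_at_right_field) (rule exI[of _ 1], auto)
  show ?thesis
    by (rule tendsto_le[OF trivial_limit_at_right_real T tendsto_const])
       (rule eventually_mono[OF ev], use A in auto)
qed

lemma block_moment_recursion_le:
  fixes \<Phi> :: "real^'m::finite^'n::finite \<Rightarrow> real"
  assumes e: "\<epsilon> > 0" and [measurable]: "\<Phi> \<in> borel_measurable borel" and nn: "\<And>x. \<Phi> x \<ge> 0"
    and sc: "\<And>l x. l > 1 \<Longrightarrow> \<Phi> (scale_block i l x) \<ge> exp (- (\<epsilon> * (l - 1) * norm (x $ i))) * \<Phi> x"
    and c: "block_moment \<Phi> i k = ennreal c" "c \<ge> 0"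
    and d: "block_moment \<Phi> i (Suc k) = ennreal d" "d \<ge> 0"
  shows "real (CARD('m) + k) * c \<le> \<epsilon> * d"
proof (rule power_perturbation_le[OF c(2)])
  fix l :: real assume l: "l > 1"
  have "block_moment \<Phi> i k \<le> ennreal (1 / l ^ (CARD('m) + k)) * block_moment \<Phi> i k
      + ennreal (\<epsilon> * (l - 1)) * block_moment \<Phi> i (Suc k)"
    by (rule block_moment_le_scaled[OF l e]) (use nn sc l in auto)
  then have "ennreal c \<le> ennreal (c / l ^ (CARD('m) + k) + \<epsilon> * d * (l - 1))"
    unfolding c d using l e c d
    by (simp add: ennreal_mult[symmetric] ennreal_plus[symmetric] mult_ac del: ennreal_plus)
  then show "c \<le> c / l ^ (CARD('m) + k) + \<epsilon> * d * (l - 1)"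
    using l e c d by (subst (asm) ennreal_le_iff) (auto intro!: add_nonneg_nonneg)
qed

lemma block_moment_recursion_ge:
  fixes \<Phi> :: "real^'m::finite^'n::finite \<Rightarrow> real"
  assumes e: "\<epsilon> > 0" and [measurable]: "\<Phi> \<in> borel_measurable borel" and nn: "\<And>x. \<Phi> x \<ge> 0"
    and sc: "\<And>l x. 0 < l \<Longrightarrow> l < 1 \<Longrightarrow>
      \<Phi> (scale_block i l x) \<ge> exp (- (\<epsilon> * (l - 1) * norm (x $ i))) * \<Phi> x"
    and c: "block_moment \<Phi> i k = ennreal c" "c \<ge> 0"
    and d: "block_moment \<Phi> i (Suc k) = ennreal d" "d \<ge> 0"
  shows "\<epsilon> * d \<le> real (CARD('m) + k) * c"
proof (rule power_perturbation_ge[OF c(2)])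
  show "\<epsilon> * d \<ge> 0" using e d by simp
  fix l :: real assume l: "0 < l" "l < 1"
  have "block_moment \<Phi> i k \<ge> ennreal (l ^ (CARD('m) + k)) *
      (block_moment \<Phi> i k + ennreal (\<epsilon> * (1 - l)) * block_moment \<Phi> i (Suc k))"
    by (rule block_moment_ge_scaled_sum[OF l e]) (use nn sc l in auto)
  then have "ennreal c \<ge> ennreal (l ^ (CARD('m) + k) * (c + \<epsilon> * d * (1 - l)))"
    unfolding c d using l e c d
    by (simp add: ennreal_mult[symmetric] ennreal_plus[symmetric] mult_ac del: ennreal_plus)
  then show "l ^ (CARD('m) + k) * (c + \<epsilon> * d * (1 - l)) \<le> c"
    using l e c d by (subst (asm) ennreal_le_iff) auto
qed

section \<open>The Laplace-type density\<close>

lemma blocknorm_nonneg: "blocknorm x \<ge> 0"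
  unfolding blocknorm_def by (simp add: sum_nonneg)

lemma norm_nth_le_blocknorm: "norm (x $ i) \<le> blocknorm x"
  unfolding blocknorm_def by (rule member_le_sum) auto

lemma norm_le_blocknorm: "norm x \<le> blocknorm x"
  unfolding blocknorm_def norm_vec_def by (rule L2_set_le_sum) auto

lemma measurable_blocknorm [measurable]:
  "(blocknorm :: real^'m::finite^'n::finite \<Rightarrow> real) \<in> borel_measurable borel"
  unfolding blocknorm_def[abs_def] by measurable

lemma blocknorm_scale_block:
  fixes x :: "real^'m::finite^'n::finite"
  assumes "l \<ge> 0"
  shows "blocknorm (scale_block i l x) = blocknorm x + (l - 1) * norm (x $ i)"
proof -
  have "blocknorm (scale_block i l x) = (\<Sum>k\<in>UNIV. norm (x $ k) + (if k = i then (l - 1) * norm (x $ k) else 0))"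
    unfolding blocknorm_def using assms by (intro sum.cong) (auto simp: scale_block_nth algebra_simps)
  then show ?thesis
    by (simp add: sum.distrib blocknorm_def)
qed

lemma blocknorm_scale_block_diff:
  "blocknorm (scale_block i l x - x) = \<bar>l - 1\<bar> * norm (x $ i)"
proof -
  have "norm (l *\<^sub>R y - y) = \<bar>l - 1\<bar> * norm y" for y :: "real^'m"
    by (metis norm_scaleR scaleR_diff_left scaleR_one)
  then have "blocknorm (scale_block i l x - x) = (\<Sum>k\<in>UNIV. (if k = i then \<bar>l - 1\<bar> * norm (x $ k) else 0))"
    unfolding blocknorm_def by (intro sum.cong) (auto simp: scale_block_nth)
  then show ?thesis by simp
qed

lemma power2_norm_vec_eq_sum: "norm (v::real^'m::finite^'n::finite) ^ 2 = (\<Sum>i\<in>UNIV. norm (v $ i) ^ 2)"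
  unfolding norm_vec_def L2_set_def by (simp add: sum_nonneg)

lemma power_le_fact_mult_exp:
  fixes y :: real
  assumes y: "y \<ge> 0"
  shows "y ^ k \<le> fact k * exp y"
proof -
  have "(\<Sum>n\<in>{k}. y ^ n /\<^sub>R fact n) \<le> (\<Sum>n. y ^ n /\<^sub>R fact n)"
    by (rule sum_le_suminf) (use y summable_exp_generic[of y] in auto)
  also have "\<dots> = exp y" by (simp add: exp_def)
  finally have "y ^ k / fact k \<le> exp y" by (simp add: divide_inverse mult.commute)
  then show ?thesis by (simp add: field_simps)
qed

lemma nn_integral_exp_neg_abs_finite:
  fixes a :: real
  assumes a: "a > 0"
  shows "(\<integral>\<^sup>+t. ennreal (exp (- (a * \<bar>t\<bar>))) \<partial>lborel) < \<infinity>"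
proof -
  let ?h = "\<lambda>x::real. ennreal (x ^ 0 * exp (- x)) * indicator {0..} x"
  have I: "(\<integral>\<^sup>+x. ?h x \<partial>lborel) = 1"
    using nn_intergal_power_times_exp_Ici[of 0] by simp
  have reflect: "(\<integral>\<^sup>+x. ?h (- x) \<partial>lborel) = (\<integral>\<^sup>+x. ?h x \<partial>lborel)"
    using nn_integral_real_affine[of ?h "-1" 0] by simp
  have "(\<integral>\<^sup>+x. ennreal (exp (- (a * \<bar>0 + 1/a * x\<bar>))) \<partial>lborel) \<le> (\<integral>\<^sup>+x. ?h x + ?h (- x) \<partial>lborel)"
    using a by (intro nn_integral_mono) (auto simp: abs_mult split: split_indicator)
  also have "\<dots> = (\<integral>\<^sup>+x. ?h x \<partial>lborel) + (\<integral>\<^sup>+x. ?h (- x) \<partial>lborel)"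
    by (rule nn_integral_add) auto
  also have "\<dots> = 2"
    unfolding reflect I by (simp add: one_add_one)
  finally have le2: "(\<integral>\<^sup>+x. ennreal (exp (- (a * \<bar>0 + 1/a * x\<bar>))) \<partial>lborel) \<le> 2" .
  have "(\<integral>\<^sup>+t. ennreal (exp (- (a * \<bar>t\<bar>))) \<partial>lborel)
      = ennreal \<bar>1/a\<bar> * (\<integral>\<^sup>+x. ennreal (exp (- (a * \<bar>0 + 1/a * x\<bar>))) \<partial>lborel)"
    by (rule nn_integral_real_affine) (use a in auto)
  also have "\<dots> \<le> ennreal \<bar>1/a\<bar> * 2"
    using le2 by (rule mult_left_mono) simp
  also have "\<dots> < \<infinity>"
    by (simp add: ennreal_mult_less_top)
  finally show ?thesis .
qed

lemma nn_integral_exp_neg_norm_finite: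
  fixes c :: real
  assumes c: "c > 0"
  shows "(\<integral>\<^sup>+v. ennreal (exp (- (c * norm (v::'a::euclidean_space)))) \<partial>lborel) < \<infinity>"
proof -
  define a where "a = c / real DIM('a)"
  have a: "a > 0" using c by (simp add: a_def)
  have "(\<integral>\<^sup>+v. ennreal (exp (- (c * norm (v::'a)))) \<partial>lborel) \<le> (\<integral>\<^sup>+v. (\<Prod>b\<in>Basis. ennreal (exp (- (a * \<bar>(v::'a) \<bullet> b\<bar>)))) \<partial>lborel)"
  proof (rule nn_integral_mono)
    fix v :: 'a
    have "(\<Sum>b\<in>Basis. \<bar>v \<bullet> b\<bar>) \<le> (\<Sum>b\<in>(Basis::'a set). norm v)"
      by (intro sum_mono Basis_le_norm)
    then have "a * (\<Sum>b\<in>(Basis::'a set). \<bar>v \<bullet> b\<bar>) \<le> a * (real DIM('a) * norm v)"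
      using a by (intro mult_left_mono) auto
    then have "(\<Sum>b\<in>(Basis::'a set). a * \<bar>v \<bullet> b\<bar>) \<le> c * norm v"
      by (simp add: a_def sum_distrib_left)
    then have "exp (- (c * norm v)) \<le> exp (\<Sum>b\<in>(Basis::'a set). - (a * \<bar>v \<bullet> b\<bar>))"
      by (simp add: sum_negf)
    also have "\<dots> = (\<Prod>b\<in>Basis. exp (- (a * \<bar>v \<bullet> b\<bar>)))" by (simp add: exp_sum)
    finally show "ennreal (exp (- (c * norm v))) \<le> (\<Prod>b\<in>Basis. ennreal (exp (- (a * \<bar>v \<bullet> b\<bar>))))"
      by (simp add: prod_ennreal ennreal_leI)
  qed
  also have "\<dots> = (\<Prod>b\<in>(Basis::'a set). (\<integral>\<^sup>+t. ennreal (exp (- (a * \<bar>t\<bar>))) \<partial>lborel))"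
    by (rule nn_integral_lborel_prod[where f="\<lambda>b t. ennreal (exp (- (a * \<bar>t\<bar>)))"]) auto
  also have "\<dots> < \<infinity>"
    using nn_integral_exp_neg_abs_finite[OF a] by (simp add: power_less_top_ennreal)
  finally show ?thesis .
qed

lemma laplace_block_moment_finite:
  fixes i :: "'n::finite"
  assumes e: "\<epsilon> > 0"
  shows "block_moment (\<lambda>v::real^'m::finite^'n. exp (- \<epsilon> * blocknorm v)) i k < \<infinity>"
proof -
  define C where "C = (2 / \<epsilon>) ^ k * fact k"
  have "block_moment (\<lambda>v::real^'m^'n. exp (- \<epsilon> * blocknorm v)) i k
     \<le> (\<integral>\<^sup>+v. ennreal C * ennreal (exp (- ((\<epsilon>/2) * norm (v::real^'m^'n)))) \<partial>lborel)"
    unfolding block_moment_def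
  proof (rule nn_integral_mono)
    fix v :: "real^'m^'n"
    let ?b = "blocknorm v"
    have "norm (v $ i) ^ k \<le> ?b ^ k"
      by (intro power_mono norm_nth_le_blocknorm) auto
    also have "?b ^ k = (2 / \<epsilon>) ^ k * (\<epsilon> * ?b / 2) ^ k"
      using e by (simp add: power_mult_distrib[symmetric])
    also have "\<dots> \<le> (2 / \<epsilon>) ^ k * (fact k * exp (\<epsilon> * ?b / 2))"
      using e blocknorm_nonneg[of v] by (intro mult_left_mono power_le_fact_mult_exp) auto
    finally have "norm (v $ i) ^ k \<le> C * exp (\<epsilon> * ?b / 2)" by (simp add: C_def mult_ac)
    then have "exp (- \<epsilon> * ?b) * norm (v $ i) ^ k \<le> exp (- \<epsilon> * ?b) * (C * exp (\<epsilon> * ?b / 2))"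
      by (intro mult_left_mono) auto
    also have "\<dots> = C * exp (- ((\<epsilon>/2) * ?b))"
      by (simp add: mult_ac flip: exp_add)
    also have "\<dots> \<le> C * exp (- ((\<epsilon>/2) * norm v))"
      using e norm_le_blocknorm[of v] by (intro mult_left_mono) (auto simp: C_def)
    finally show "ennreal (exp (- \<epsilon> * ?b) * norm (v $ i) ^ k) \<le> ennreal C * ennreal (exp (- ((\<epsilon>/2) * norm v)))"
      using e by (subst ennreal_mult[symmetric]) (auto intro!: ennreal_leI simp: C_def)
  qed
  also have "\<dots> = ennreal C * (\<integral>\<^sup>+v. ennreal (exp (- ((\<epsilon>/2) * norm (v::real^'m^'n)))) \<partial>lborel)"
    by (rule nn_integral_cmult) measurable
  also have "\<dots> < \<infinity>"
    using nn_integral_exp_neg_norm_finite[of "\<epsilon>/2", where 'a="real^'m^'n"] e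
    by (simp add: ennreal_mult_less_top)
  finally show ?thesis .
qed

lemma laplace_block_moment_recursion:
  fixes i :: "'n::finite"
  assumes e: "\<epsilon> > 0"
  defines "M \<equiv> \<lambda>k. enn2real (block_moment (\<lambda>v::real^'m::finite^'n. exp (- \<epsilon> * blocknorm v)) i k)"
  shows "\<epsilon> * M (Suc k) = real (CARD('m) + k) * M k"
proof -
  let ?\<Phi> = "\<lambda>v::real^'m^'n. exp (- \<epsilon> * blocknorm v)"
  have "block_moment ?\<Phi> i k < \<infinity>" for k
    by (rule laplace_block_moment_finite[OF e])
  then have fin: "block_moment ?\<Phi> i k = ennreal (M k)" and "M k \<ge> 0" for k
    unfolding M_def by auto
  moreover have "?\<Phi> (scale_block i l x) = exp (- (\<epsilon> * (l - 1) * norm (x $ i))) * ?\<Phi> x" if "l > 0" for l x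
    using that by (simp add: blocknorm_scale_block algebra_simps flip: exp_add)
  ultimately have "real (CARD('m) + k) * M k \<le> \<epsilon> * M (Suc k)"
    and "\<epsilon> * M (Suc k) \<le> real (CARD('m) + k) * M k"
    by (intro block_moment_recursion_le block_moment_recursion_ge e; force)+
  then show ?thesis by linarith
qed

lemma laplace_normalizer_eq_block_moment:
  fixes i :: "'n::finite"
  assumes "\<epsilon> > 0"
  shows "(\<integral>w. exp (- \<epsilon> * blocknorm w) \<partial>(lborel :: (real^'m::finite^'n) measure))
    = enn2real (block_moment (\<lambda>v::real^'m^'n. exp (- \<epsilon> * blocknorm v)) i 0)"
  unfolding block_moment_def by (subst integral_eq_nn_integral) auto

lemma laplace_normalizer_pos:
  assumes e: "\<epsilon> > 0"
  shows "(\<integral>w. exp (- \<epsilon> * blocknorm w) \<partial>(lborel :: (real^'m::finite^'n::finite) measure)) > 0"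
proof -
  obtain i :: 'n where True by simp
  let ?\<Phi> = "\<lambda>v::real^'m^'n. exp (- \<epsilon> * blocknorm v)"
  have "block_moment ?\<Phi> i 0 \<noteq> 0"
  proof
    assume "block_moment ?\<Phi> i 0 = 0"
    then have "AE v in (lborel::(real^'m^'n) measure). False"
      unfolding block_moment_def by (subst (asm) nn_integral_0_iff_AE) auto
    then have "ae_filter (lborel::(real^'m^'n) measure) = bot"
      using trivial_limit_def by blast
    then show False by (simp add: ae_filter_eq_bot_iff)
  qed
  moreover have "block_moment ?\<Phi> i 0 < \<infinity>"
    by (rule laplace_block_moment_finite[OF e])
  ultimately show ?thesis
    unfolding laplace_normalizer_eq_block_moment[OF e, of i]
    by (simp add: enn2real_positive_iff zero_less_iff_neq_zero)
qed

lemma prob_space_lap_density: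
  assumes e: "\<epsilon> > 0"
  shows "prob_space (density lborel (\<lambda>v::real^'m::finite^'n::finite. ennreal (lap_density \<epsilon> v)))"
proof (rule prob_spaceI)
  obtain i :: 'n where True by simp
  let ?\<Phi> = "\<lambda>v::real^'m^'n. exp (- \<epsilon> * blocknorm v)"
  define Z where "Z = (\<integral>w. ?\<Phi> w \<partial>lborel)"
  have Z: "Z > 0" unfolding Z_def by (rule laplace_normalizer_pos[OF e])
  have "block_moment ?\<Phi> i 0 < \<infinity>"
    by (rule laplace_block_moment_finite[OF e])
  then have "block_moment ?\<Phi> i 0 = ennreal Z"
    unfolding Z_def laplace_normalizer_eq_block_moment[OF e, of i] by simp
  moreover have "(\<integral>\<^sup>+v. ennreal (?\<Phi> v) \<partial>lborel) = block_moment ?\<Phi> i 0"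
    by (simp add: block_moment_def)
  ultimately have int_\<Phi>: "(\<integral>\<^sup>+v. ennreal (?\<Phi> v) \<partial>lborel) = ennreal Z"
    by simp
  have "emeasure (density lborel (\<lambda>v::real^'m^'n. ennreal (lap_density \<epsilon> v))) UNIV
      = (\<integral>\<^sup>+v. ennreal (?\<Phi> v) * ennreal (1 / Z) \<partial>lborel)"
    using Z by (subst emeasure_density)
      (auto simp: lap_density_def Z_def ennreal_mult[symmetric] intro!: nn_integral_cong)
  also have "\<dots> = ennreal Z * ennreal (1 / Z)"
    using int_\<Phi> by (subst nn_integral_multc) auto
  also have "\<dots> = 1" using Z by (simp flip: ennreal_mult)
  finally show "emeasure (density lborel (\<lambda>v::real^'m^'n. ennreal (lap_density \<epsilon> v)))
      (space (density lborel (\<lambda>v. ennreal (lap_density \<epsilon> v)))) = 1"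
    by simp
qed

lemma laplace_second_block_moment:
  fixes i :: "'n::finite"
  assumes e: "\<epsilon> > 0"
  shows "block_moment (\<lambda>v::real^'m::finite^'n. exp (- \<epsilon> * blocknorm v)) i 2
    = ennreal (real CARD('m) * (real CARD('m) + 1) / \<epsilon> ^ 2 * (\<integral>w. exp (- \<epsilon> * blocknorm w) \<partial>(lborel :: (real^'m^'n) measure)))"
proof -
  let ?\<Phi> = "\<lambda>v::real^'m^'n. exp (- \<epsilon> * blocknorm v)"
  define M where "M k = enn2real (block_moment ?\<Phi> i k)" for k
  have "\<epsilon> * M 1 = real CARD('m) * M 0"
    using laplace_block_moment_recursion[OF e, of i 0, where 'm='m] by (simp add: M_def)
  moreover have "\<epsilon> * M 2 = (real CARD('m) + 1) * M 1"
    using laplace_block_moment_recursion[OF e, of i 1, where 'm='m] by (simp add: M_def numeral_2_eq_2)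
  ultimately have "\<epsilon> * (\<epsilon> * M 2) = (real CARD('m) + 1) * real CARD('m) * M 0"
    by (metis mult.assoc mult.left_commute)
  then have "M 2 = real CARD('m) * (real CARD('m) + 1) / \<epsilon> ^ 2 * M 0"
    using e by (simp add: field_simps power2_eq_square)
  moreover have "block_moment ?\<Phi> i 2 < \<infinity>"
    by (rule laplace_block_moment_finite[OF e])
  then have "block_moment ?\<Phi> i 2 = ennreal (M 2)"
    by (simp add: M_def)
  moreover have "(\<integral>w. ?\<Phi> w \<partial>lborel) = M 0"
    unfolding M_def by (rule laplace_normalizer_eq_block_moment[OF e])
  ultimately show ?thesis
    by simp
qed

lemma nn_integral_norm_sq_lap_density:
  assumes e: "\<epsilon> > 0"
  shows "(\<integral>\<^sup>+ v. ennreal (norm v ^ 2 * lap_density \<epsilon> v) \<partial>(lborel :: (real^'m::finite^'n::finite) measure))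
    = ennreal (real CARD('n) * real CARD('m) * (real CARD('m) + 1) / \<epsilon> ^ 2)"
proof -
  let ?\<Phi> = "\<lambda>v::real^'m^'n. exp (- \<epsilon> * blocknorm v)"
  define Z where "Z = (\<integral>w. ?\<Phi> w \<partial>lborel)"
  have Z: "Z > 0" unfolding Z_def by (rule laplace_normalizer_pos[OF e])
  have "(\<integral>\<^sup>+ v. ennreal (norm v ^ 2 * lap_density \<epsilon> v) \<partial>(lborel :: (real^'m^'n) measure))
      = (\<integral>\<^sup>+ v. (\<Sum>i\<in>UNIV. ennreal (?\<Phi> v * norm (v $ i) ^ 2) * ennreal (1 / Z)) \<partial>lborel)"
  proof (rule nn_integral_cong)
    fix v :: "real^'m^'n"
    have "norm v ^ 2 * lap_density \<epsilon> v = (\<Sum>i\<in>UNIV. ?\<Phi> v * norm (v $ i) ^ 2 * (1 / Z))"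
      by (simp add: lap_density_def Z_def power2_norm_vec_eq_sum sum_distrib_left sum_divide_distrib mult_ac)
    then show "ennreal (norm v ^ 2 * lap_density \<epsilon> v) = (\<Sum>i\<in>UNIV. ennreal (?\<Phi> v * norm (v $ i) ^ 2) * ennreal (1 / Z))"
      using Z by (simp add: ennreal_mult[symmetric] sum_nonneg)
  qed
  also have "\<dots> = (\<Sum>i\<in>UNIV. block_moment ?\<Phi> i 2 * ennreal (1 / Z))"
    unfolding block_moment_def by (subst nn_integral_sum) (auto simp: nn_integral_multc)
  also have "\<dots> = (\<Sum>i\<in>(UNIV::'n set). ennreal (real CARD('m) * (real CARD('m) + 1) / \<epsilon> ^ 2))"
    unfolding laplace_second_block_moment[OF e] Z_def[symmetric]
    using Z by (simp add: ennreal_mult'[symmetric])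
  also have "\<dots> = ennreal (real CARD('n) * real CARD('m) * (real CARD('m) + 1) / \<epsilon> ^ 2)"
    by (simp add: ennreal_of_nat_eq_real_of_nat ennreal_mult[symmetric])
  finally show ?thesis .
qed

section \<open>Smoothing a private noise law over balls\<close>

lemma measure_ball_le_exp_blocknorm:
  fixes g :: "(real^'m::finite^'n::finite) measure"
  assumes sg: "sets g = sets borel" and lp: "lipschitz_private \<epsilon> blocknorm (additive_mech g)"
  shows "measure g (ball x \<delta>) \<le> exp (\<epsilon> * blocknorm w) * measure g (ball (x + w) \<delta>)"
proof -
  have sp: "space g = UNIV" using sets_eq_imp_space_eq[OF sg] by simp
  have m: "(\<lambda>v. u + v) \<in> measurable g borel" for u :: "real^'m^'n"
    by (subst measurable_cong_sets[OF sg refl]) measurable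
  have mech: "measure (additive_mech g u) (ball x \<delta>) = measure g (ball (x - u) \<delta>)" for u
  proof -
    have "(\<lambda>v. u + v) -` ball x \<delta> \<inter> space g = ball (x - u) \<delta>"
      by (auto simp: sp dist_norm algebra_simps)
    then show ?thesis unfolding additive_mech_def by (simp add: measure_distr[OF m])
  qed
  have "measure (additive_mech g 0) (ball x \<delta>) \<le> exp (\<epsilon> * blocknorm (0 - (- w))) * measure (additive_mech g (- w)) (ball x \<delta>)"
    using lp borel_open[OF open_ball, of x \<delta>] unfolding lipschitz_private_def by blast
  then show ?thesis by (simp add: mech)
qed

lemma measurable_dist_less_indicator:
  "(\<lambda>p::('a::metric_space \<times> 'a). indicator {p. dist (fst p) (snd p) < \<delta>} p :: ennreal) \<in> borel_measurable borel"
proof -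
  have "{p::('a \<times> 'a). dist (fst p) (snd p) < \<delta>} \<in> sets borel"
    by (rule borel_open) (intro open_Collect_less continuous_intros)
  then show ?thesis by measurable
qed

lemma borel_measurable_pair_measure_borel:
  fixes g M :: "'a::euclidean_space measure"
  assumes "sets M = sets borel" "sets g = sets borel"
  shows "borel_measurable (M \<Otimes>\<^sub>M g) = (borel_measurable borel :: (('a \<times> 'a) \<Rightarrow> ennreal) set)"
proof -
  have "sets (M \<Otimes>\<^sub>M g) = sets (borel \<Otimes>\<^sub>M borel :: ('a \<times> 'a) measure)"
    using assms by (intro sets_pair_measure_cong) auto
  also have "\<dots> = sets (borel :: ('a \<times> 'a) measure)" by (metis borel_prod)
  finally show ?thesis by (intro measurable_cong_sets) auto
qed

lemma borel_measurable_nn_integral_ball: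
  fixes g :: "'a::euclidean_space measure" and h :: "'a \<Rightarrow> real"
  assumes sg: "sets g = sets borel" and hm [measurable]: "h \<in> borel_measurable borel"
  shows "(\<lambda>y. \<integral>\<^sup>+ x. indicator (ball y \<delta>) x * ennreal (h x) \<partial>lborel) \<in> borel_measurable g"
proof -
  let ?D = "{p::'a \<times> 'a. dist (fst p) (snd p) < \<delta>}"
  have "(\<lambda>p::'a \<times> 'a. snd p) \<in> borel \<rightarrow>\<^sub>M borel"
    by (intro borel_measurable_continuous_onI continuous_intros)
  then have "(\<lambda>p::'a \<times> 'a. h (snd p)) \<in> borel_measurable borel"
    using measurable_compose[OF _ hm] by blast
  then have "(\<lambda>p. indicator ?D p * ennreal (h (snd p))) \<in> borel_measurable borel"
    using measurable_dist_less_indicator[of \<delta>, where 'a='a] by measurable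
  then have "(\<lambda>(y, x). indicator ?D (y, x) * ennreal (h x)) \<in> borel_measurable (g \<Otimes>\<^sub>M lborel)"
    using borel_measurable_pair_measure_borel[OF sg sets_lborel] by (simp add: case_prod_beta')
  then have "(\<lambda>y. \<integral>\<^sup>+ x. indicator ?D (y, x) * ennreal (h x) \<partial>lborel) \<in> borel_measurable g"
    by (rule lborel.borel_measurable_nn_integral)
  moreover have "indicator ?D (y, x) = (indicator (ball y \<delta>) x :: ennreal)" for x y
    by (auto simp: indicator_def)
  ultimately show ?thesis by simp
qed

lemma nn_integral_measure_ball_mult:
  fixes g :: "'a::euclidean_space measure" and h :: "'a \<Rightarrow> real"
  assumes sg: "sets g = sets borel" and pg: "prob_space g"
    and hm [measurable]: "h \<in> borel_measurable borel" and h0: "\<And>x. h x \<ge> 0"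
  shows "(\<integral>\<^sup>+ x. ennreal (measure g (ball x \<delta>) * h x) \<partial>lborel)
       = (\<integral>\<^sup>+ y. (\<integral>\<^sup>+ x. indicator (ball y \<delta>) x * ennreal (h x) \<partial>lborel) \<partial>g)"
proof -
  interpret g: prob_space g by fact
  interpret p: pair_sigma_finite lborel g
    by (intro pair_sigma_finite.intro sigma_finite_lborel g.sigma_finite_measure_axioms)
  let ?D = "{p::'a \<times> 'a. dist (fst p) (snd p) < \<delta>}"
  let ?F = "\<lambda>x y. indicator ?D (x, y) * ennreal (h x)"
  have "(\<lambda>p::'a \<times> 'a. fst p) \<in> borel \<rightarrow>\<^sub>M borel"
    by (intro borel_measurable_continuous_onI continuous_intros)
  then have "(\<lambda>p::'a \<times> 'a. h (fst p)) \<in> borel_measurable borel"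
    using measurable_compose[OF _ hm] by blast
  then have "(\<lambda>p. indicator ?D p * ennreal (h (fst p))) \<in> borel_measurable borel"
    using measurable_dist_less_indicator[of \<delta>, where 'a='a] by measurable
  then have Fm: "case_prod ?F \<in> borel_measurable (lborel \<Otimes>\<^sub>M g)"
    using borel_measurable_pair_measure_borel[OF sets_lborel sg] by (simp add: case_prod_beta')
  have "(\<integral>\<^sup>+ y. ?F x y \<partial>g) = ennreal (measure g (ball x \<delta>) * h x)" for x
  proof -
    have "(\<integral>\<^sup>+ y. ?F x y \<partial>g) = (\<integral>\<^sup>+ y. ennreal (h x) * indicator (ball x \<delta>) y \<partial>g)"
      by (intro nn_integral_cong) (auto simp: indicator_def)
    also have "\<dots> = ennreal (h x) * emeasure g (ball x \<delta>)"
      using sg by (subst nn_integral_cmult_indicator) auto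
    finally show ?thesis
      using h0 by (simp add: g.emeasure_eq_measure ennreal_mult[symmetric] mult.commute)
  qed
  moreover have "?F x y = indicator (ball y \<delta>) x * ennreal (h x)" for x y
    by (auto simp: indicator_def dist_commute)
  ultimately show ?thesis
    using p.Fubini'[OF Fm] by simp
qed

lemma borel_measurable_measure_ball:
  fixes g :: "'a::euclidean_space measure"
  assumes sg: "sets g = sets borel" and pg: "prob_space g"
  shows "(\<lambda>x. measure g (ball x \<delta>)) \<in> borel_measurable borel"
proof -
  interpret g: prob_space g by fact
  let ?D = "{p::'a \<times> 'a. dist (fst p) (snd p) < \<delta>}"
  have eq: "measure g (ball x \<delta>) = enn2real (\<integral>\<^sup>+y. indicator ?D (x, y) \<partial>g)" for x
  proof -
    have "(\<integral>\<^sup>+y. indicator ?D (x, y) \<partial>g) = (\<integral>\<^sup>+y. indicator (ball x \<delta>) y \<partial>g)"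
      by (intro nn_integral_cong) (auto simp: indicator_def)
    also have "\<dots> = emeasure g (ball x \<delta>)"
      using sg by (intro nn_integral_indicator) auto
    finally show ?thesis by (simp add: g.emeasure_eq_measure)
  qed
  have "(\<lambda>x. \<integral>\<^sup>+y. indicator ?D (x, y) \<partial>g) \<in> borel_measurable borel"
  proof (rule g.borel_measurable_nn_integral)
    show "(\<lambda>(x, y). indicator ?D (x, y) :: ennreal) \<in> borel_measurable (borel \<Otimes>\<^sub>M g)"
      using measurable_dist_less_indicator[of \<delta>, where 'a='a]
        borel_measurable_pair_measure_borel[of borel g, OF refl sg] by simp
  qed
  then show ?thesis unfolding eq by measurable
qed

lemma emeasure_lborel_ball_eq:
  fixes y :: "'a::euclidean_space"
  shows "emeasure lborel (ball y \<delta>) = ennreal (measure lborel (ball (0::'a) \<delta>))"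
proof -
  have "emeasure lborel (ball y \<delta>) = emeasure (distr lborel borel ((+) y)) (ball y \<delta>)"
    by (simp add: lborel_distr_plus)
  also have "\<dots> = emeasure lborel ((+) y -` ball y \<delta> \<inter> space lborel)"
    by (rule emeasure_distr) auto
  also have "(+) y -` ball y \<delta> \<inter> space lborel = ball 0 \<delta>"
    by (auto simp: dist_norm)
  also have "emeasure lborel (ball (0::'a) \<delta>) = ennreal (measure lborel (ball (0::'a) \<delta>))"
    using emeasure_lborel_ball_finite[of "0::'a" \<delta>] by (simp add: measure_def)
  finally show ?thesis .
qed

lemma block_moment_measure_ball:
  fixes g :: "(real^'m::finite^'n::finite) measure"
  assumes "sets g = sets borel" and "prob_space g"
  shows "block_moment (\<lambda>x. measure g (ball x \<delta>)) i k
    = (\<integral>\<^sup>+ y. (\<integral>\<^sup>+ x. indicator (ball y \<delta>) x * ennreal (norm (x $ i) ^ k) \<partial>lborel) \<partial>g)"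
  unfolding block_moment_def using assms by (intro nn_integral_measure_ball_mult) auto

lemma block_moment_measure_ball_zero:
  fixes g :: "(real^'m::finite^'n::finite) measure"
  assumes sg: "sets g = sets borel" and pg: "prob_space g"
  shows "block_moment (\<lambda>x. measure g (ball x \<delta>)) i 0 = ennreal (measure lborel (ball (0::real^'m^'n) \<delta>))"
proof -
  interpret g: prob_space g by fact
  show ?thesis
    unfolding block_moment_measure_ball[OF sg pg]
    by (simp add: nn_integral_indicator emeasure_lborel_ball_eq g.emeasure_space_1
        del: nn_integral_indicator_singleton)
qed

lemma block_moment_measure_ball_le:
  fixes g :: "(real^'m::finite^'n::finite) measure"
  assumes sg: "sets g = sets borel" and pg: "prob_space g" and d: "\<delta> > 0"
  shows "block_moment (\<lambda>x. measure g (ball x \<delta>)) i k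
    \<le> (\<integral>\<^sup>+ y. ennreal ((norm (y $ i) + \<delta>) ^ k) \<partial>g) * ennreal (measure lborel (ball (0::real^'m^'n) \<delta>))"
proof -
  have "(\<integral>\<^sup>+ x. indicator (ball y \<delta>) x * ennreal (norm (x $ i) ^ k) \<partial>lborel)
     \<le> ennreal ((norm (y $ i) + \<delta>) ^ k) * ennreal (measure lborel (ball (0::real^'m^'n) \<delta>))" for y :: "real^'m^'n"
  proof -
    have "indicator (ball y \<delta>) x * ennreal (norm (x $ i) ^ k) \<le> ennreal ((norm (y $ i) + \<delta>) ^ k) * indicator (ball y \<delta>) x"
      for x :: "real^'m^'n"
    proof (cases "x \<in> ball y \<delta>")
      case True
      have "norm (x $ i) \<le> norm (y $ i) + norm ((x - y) $ i)"
        by (metis add.commute diff_add_cancel norm_triangle_ineq vector_minus_component)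
      also have "norm ((x - y) $ i) \<le> norm (x - y)" by (rule Finite_Cartesian_Product.norm_nth_le)
      also have "norm (x - y) < \<delta>" using True by (simp add: dist_norm norm_minus_commute)
      finally have "norm (x $ i) ^ k \<le> (norm (y $ i) + \<delta>) ^ k" by (intro power_mono) auto
      then show ?thesis using True by (simp add: ennreal_leI)
    qed simp
    then have "(\<integral>\<^sup>+ x. indicator (ball y \<delta>) x * ennreal (norm (x $ i) ^ k) \<partial>lborel)
       \<le> (\<integral>\<^sup>+ x. ennreal ((norm (y $ i) + \<delta>) ^ k) * indicator (ball y \<delta>) x \<partial>lborel)"
      by (intro nn_integral_mono)
    then show ?thesis
      by (simp add: nn_integral_cmult_indicator emeasure_lborel_ball_eq)
  qed
  then have "block_moment (\<lambda>x. measure g (ball x \<delta>)) i k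
      \<le> (\<integral>\<^sup>+ y. ennreal ((norm (y $ i) + \<delta>) ^ k) * ennreal (measure lborel (ball (0::real^'m^'n) \<delta>)) \<partial>g)"
    unfolding block_moment_measure_ball[OF sg pg] by (intro nn_integral_mono)
  also have "\<dots> = (\<integral>\<^sup>+ y. ennreal ((norm (y $ i) + \<delta>) ^ k) \<partial>g) * ennreal (measure lborel (ball (0::real^'m^'n) \<delta>))"
    by (rule nn_integral_multc) (simp add: measurable_cong_sets[OF sg refl])
  finally show ?thesis .
qed

lemma block_moment_measure_ball_one_ge:
  fixes g :: "(real^'m::finite^'n::finite) measure"
  assumes sg: "sets g = sets borel" and pg: "prob_space g" and d: "\<delta> > 0"
  defines "b \<equiv> measure lborel (ball (0::real^'m^'n) \<delta>)"
  shows "(\<integral>\<^sup>+ y. ennreal (norm (y $ i)) \<partial>g) * ennreal b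
    \<le> block_moment (\<lambda>x. measure g (ball x \<delta>)) i 1 + ennreal (\<delta> * b)"
proof -
  interpret g: prob_space g by fact
  let ?I = "\<lambda>y. \<integral>\<^sup>+ x. indicator (ball y \<delta>) x * ennreal (norm (x $ i)) \<partial>lborel"
  have "ennreal (norm (y $ i)) * ennreal b \<le> ?I y + ennreal (\<delta> * b)" for y :: "real^'m^'n"
  proof -
    have [measurable]: "ball y \<delta> \<in> sets borel" by simp
    have "ennreal (norm (y $ i)) * indicator (ball y \<delta>) x \<le> indicator (ball y \<delta>) x * ennreal (norm (x $ i)) + ennreal \<delta> * indicator (ball y \<delta>) x"
      for x :: "real^'m^'n"
    proof (cases "x \<in> ball y \<delta>")
      case True
      have "norm (y $ i) \<le> norm (x $ i) + norm ((y - x) $ i)"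
        by (metis add.commute diff_add_cancel norm_triangle_ineq vector_minus_component)
      also have "norm ((y - x) $ i) \<le> norm (y - x)" by (rule Finite_Cartesian_Product.norm_nth_le)
      also have "norm (y - x) < \<delta>" using True by (simp add: dist_norm)
      finally show ?thesis using True d by (simp add: ennreal_plus[symmetric] del: ennreal_plus)
    qed simp
    then have "(\<integral>\<^sup>+ x. ennreal (norm (y $ i)) * indicator (ball y \<delta>) x \<partial>lborel)
        \<le> (\<integral>\<^sup>+ x. indicator (ball y \<delta>) x * ennreal (norm (x $ i)) + ennreal \<delta> * indicator (ball y \<delta>) x \<partial>lborel)"
      by (intro nn_integral_mono)
    also have "\<dots> = ?I y + ennreal (\<delta> * b)"
      using d by (subst nn_integral_add) (auto simp: nn_integral_cmult_indicator emeasure_lborel_ball_eq b_def ennreal_mult)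
    finally show ?thesis
      by (simp add: nn_integral_cmult_indicator emeasure_lborel_ball_eq b_def)
  qed
  then have "(\<integral>\<^sup>+ y. ennreal (norm (y $ i)) * ennreal b \<partial>g) \<le> (\<integral>\<^sup>+ y. ?I y + ennreal (\<delta> * b) \<partial>g)"
    by (intro nn_integral_mono)
  also have "\<dots> = block_moment (\<lambda>x. measure g (ball x \<delta>)) i 1 + ennreal (\<delta> * b)"
    unfolding block_moment_measure_ball[OF sg pg]
    using borel_measurable_nn_integral_ball[OF sg, of "\<lambda>x. norm (x $ i)" \<delta>]
    by (subst nn_integral_add) (auto simp: g.emeasure_space_1)
  finally show ?thesis
    by (simp add: nn_integral_multc measurable_cong_sets[OF sg refl])
qed

lemma measure_ball_scale_block_ge:
  fixes g :: "(real^'m::finite^'n::finite) measure"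
  assumes sg: "sets g = sets borel" and lp: "lipschitz_private \<epsilon> blocknorm (additive_mech g)"
    and l: "l \<ge> 1"
  shows "measure g (ball (scale_block i l x) \<delta>) \<ge> exp (- (\<epsilon> * (l - 1) * norm (x $ i))) * measure g (ball x \<delta>)"
proof -
  let ?t = "\<epsilon> * (l - 1) * norm (x $ i)"
  have "measure g (ball x \<delta>) \<le> exp (\<epsilon> * blocknorm (scale_block i l x - x)) * measure g (ball (x + (scale_block i l x - x)) \<delta>)"
    by (rule measure_ball_le_exp_blocknorm[OF sg lp])
  then have "measure g (ball x \<delta>) \<le> exp ?t * measure g (ball (scale_block i l x) \<delta>)"
    using l by (simp add: blocknorm_scale_block_diff mult.assoc)
  then have "exp (- ?t) * measure g (ball x \<delta>) \<le> exp (- ?t) * (exp ?t * measure g (ball (scale_block i l x) \<delta>))"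
    by (intro mult_left_mono) auto
  then show ?thesis
    by (simp add: mult.assoc[symmetric] flip: exp_add)
qed

lemma block_moment_measure_ball_le_moments:
  fixes g :: "(real^'m::finite^'n::finite) measure"
  assumes sg: "sets g = sets borel" and pg: "prob_space g" and d: "\<delta> > 0"
    and A1: "(\<integral>\<^sup>+ v. ennreal (norm (v $ i)) \<partial>g) = ennreal a" and a0: "a \<ge> 0"
    and A2: "(\<integral>\<^sup>+ v. ennreal (norm (v $ i) ^ 2) \<partial>g) = ennreal a2" and a20: "a2 \<ge> 0"
  defines "b \<equiv> measure lborel (ball (0::real^'m^'n) \<delta>)"
  shows "block_moment (\<lambda>x. measure g (ball x \<delta>)) i 1 \<le> ennreal ((a + \<delta>) * b)"
    and "block_moment (\<lambda>x. measure g (ball x \<delta>)) i 2 \<le> ennreal ((a2 + 2 * \<delta> * a + \<delta>^2) * b)"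
proof -
  interpret g: prob_space g by fact
  have [measurable]: "(\<lambda>v. norm (v $ i)) \<in> borel_measurable g"
    by (subst measurable_cong_sets[OF sg refl]) measurable
  have "(\<integral>\<^sup>+ y. ennreal ((norm (y $ i) + \<delta>) ^ 1) \<partial>g) = (\<integral>\<^sup>+ y. ennreal (norm (y $ i) ^ 1) + ennreal \<delta> \<partial>g)"
    using d by (intro nn_integral_cong) simp
  also have "\<dots> = ennreal (a + \<delta>)"
    using A1 a0 d by (subst nn_integral_add) (auto simp: g.emeasure_space_1)
  finally show "block_moment (\<lambda>x. measure g (ball x \<delta>)) i 1 \<le> ennreal ((a + \<delta>) * b)"
    using block_moment_measure_ball_le[OF sg pg d, of i 1] a0 d
    by (simp add: b_def ennreal_mult)
  have sq: "ennreal ((norm (y $ i) + \<delta>) ^ 2)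
      = ennreal (norm (y $ i) ^ 2) + (ennreal (2 * \<delta>) * ennreal (norm (y $ i)) + ennreal (\<delta>^2))" for y
  proof -
    have "(norm (y $ i) + \<delta>) ^ 2 = norm (y $ i) ^ 2 + (2 * \<delta> * norm (y $ i) + \<delta>^2)"
      by (simp add: power2_sum)
    then show ?thesis using d by (simp add: ennreal_mult)
  qed
  have "(\<integral>\<^sup>+ y. ennreal ((norm (y $ i) + \<delta>) ^ 2) \<partial>g)
      = (\<integral>\<^sup>+ y. ennreal (norm (y $ i) ^ 2) + (ennreal (2 * \<delta>) * ennreal (norm (y $ i)) + ennreal (\<delta>^2)) \<partial>g)"
    by (simp only: sq)
  also have "\<dots> = (\<integral>\<^sup>+ y. ennreal (norm (y $ i) ^ 2) \<partial>g)
      + (ennreal (2 * \<delta>) * (\<integral>\<^sup>+ y. ennreal (norm (y $ i)) \<partial>g) + ennreal (\<delta>^2))"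
    by (simp add: nn_integral_add nn_integral_cmult g.emeasure_space_1)
  also have "\<dots> = ennreal (a2 + 2 * \<delta> * a + \<delta>^2)"
    using A1 A2 a0 a20 d by (simp add: ennreal_mult)
  finally show "block_moment (\<lambda>x. measure g (ball x \<delta>)) i 2 \<le> ennreal ((a2 + 2 * \<delta> * a + \<delta>^2) * b)"
    using block_moment_measure_ball_le[OF sg pg d, of i 2] a0 a20 d
    by (simp add: b_def ennreal_mult)
qed

lemma measure_ball_block_moment_recursion:
  fixes g :: "(real^'m::finite^'n::finite) measure"
  assumes e: "\<epsilon> > 0" and pg: "prob_space g" and sg: "sets g = sets borel"
    and lp: "lipschitz_private \<epsilon> blocknorm (additive_mech g)"
    and c: "block_moment (\<lambda>x. measure g (ball x \<delta>)) i k = ennreal c" "c \<ge> 0"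
    and d: "block_moment (\<lambda>x. measure g (ball x \<delta>)) i (Suc k) = ennreal d" "d \<ge> 0"
  shows "real (CARD('m) + k) * c \<le> \<epsilon> * d"
proof (rule block_moment_recursion_le[OF e _ _ _ c d])
  show "(\<lambda>x. measure g (ball x \<delta>)) \<in> borel_measurable borel"
    by (rule borel_measurable_measure_ball[OF sg pg])
  show "exp (- (\<epsilon> * (l - 1) * norm (x $ i))) * measure g (ball x \<delta>) \<le> measure g (ball (scale_block i l x) \<delta>)"
    if "l > 1" for l x
    using that by (intro measure_ball_scale_block_ge[OF sg lp]) auto
qed simp

lemma private_block_moment_inequalities:
  fixes g :: "(real^'m::finite^'n::finite) measure" and i :: 'n
  assumes e: "\<epsilon> > 0" and pg: "prob_space g" and sg: "sets g = sets borel"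
    and lp: "lipschitz_private \<epsilon> blocknorm (additive_mech g)" and d: "\<delta> > 0"
    and A1: "(\<integral>\<^sup>+ v. ennreal (norm (v $ i)) \<partial>g) = ennreal a" and a0: "a \<ge> 0"
    and A2: "(\<integral>\<^sup>+ v. ennreal (norm (v $ i) ^ 2) \<partial>g) = ennreal a2" and a20: "a2 \<ge> 0"
  shows "real CARD('m) \<le> \<epsilon> * (a + \<delta>)"
    and "(real CARD('m) + 1) * (a - \<delta>) \<le> \<epsilon> * (a2 + 2 * \<delta> * a + \<delta>^2)"
proof -
  define b where "b = measure lborel (ball (0::real^'m^'n) \<delta>)"
  have b: "b > 0" unfolding b_def using content_ball_pos[OF d] by simp
  define P where "P x = measure g (ball x \<delta>)" for x :: "real^'m^'n"
  note rec = measure_ball_block_moment_recursion[OF e pg sg lp, of \<delta> i, folded P_def]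
  note le = block_moment_measure_ball_le_moments[OF sg pg d A1 a0 A2 a20, folded b_def P_def]
  obtain j1 where J1: "block_moment P i 1 = ennreal j1" "0 \<le> j1" "j1 \<le> (a + \<delta>) * b"
    using le(1) a0 d b by (cases "block_moment P i 1") (auto simp: ennreal_le_iff2 top_unique)
  obtain j2 where J2: "block_moment P i 2 = ennreal j2" "0 \<le> j2" "j2 \<le> (a2 + 2 * \<delta> * a + \<delta>^2) * b"
    using le(2) a0 a20 d b by (cases "block_moment P i 2") (auto simp: ennreal_le_iff2 top_unique)
  have "ennreal (a * b) \<le> ennreal j1 + ennreal (\<delta> * b)"
    using block_moment_measure_ball_one_ge[OF sg pg d, of i, folded b_def P_def] A1 J1 a0 b d
    by (simp add: ennreal_mult)
  then have j1_ge: "(a - \<delta>) * b \<le> j1"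
    using J1 d b by (simp add: algebra_simps ennreal_plus[symmetric] del: ennreal_plus)
  have "real (CARD('m) + 0) * b \<le> \<epsilon> * j1"
    using block_moment_measure_ball_zero[OF sg pg, of \<delta> i, folded b_def P_def] b J1
    by (intro rec) auto
  also have "\<epsilon> * j1 \<le> \<epsilon> * ((a + \<delta>) * b)"
    using J1 e by (intro mult_left_mono) auto
  finally have "real CARD('m) * b \<le> (\<epsilon> * (a + \<delta>)) * b"
    by (simp add: mult.assoc)
  then show "real CARD('m) \<le> \<epsilon> * (a + \<delta>)"
    using b by simp
  have "real (CARD('m) + 1) * j1 \<le> \<epsilon> * j2"
    using J1 J2 by (intro rec) (auto simp: numeral_2_eq_2)
  moreover have "(real CARD('m) + 1) * ((a - \<delta>) * b) \<le> (real CARD('m) + 1) * j1"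
    using j1_ge by (intro mult_left_mono) auto
  moreover have "\<epsilon> * j2 \<le> \<epsilon> * ((a2 + 2 * \<delta> * a + \<delta>^2) * b)"
    using J2 e by (intro mult_left_mono) auto
  ultimately have "((real CARD('m) + 1) * (a - \<delta>)) * b \<le> (\<epsilon> * (a2 + 2 * \<delta> * a + \<delta>^2)) * b"
    by (simp add: algebra_simps)
  then show "(real CARD('m) + 1) * (a - \<delta>) \<le> \<epsilon> * (a2 + 2 * \<delta> * a + \<delta>^2)"
    using b by simp
qed

section \<open>The lower bound\<close>

lemma le_one_plus_power2:
  fixes x :: real
  assumes "x \<ge> 0"
  shows "x \<le> 1 + x ^ 2"
proof -
  have "0 \<le> (x - 1) ^ 2" by simp
  then show ?thesis using assms by (simp add: power2_diff)
qed

lemma private_first_moment_inequalities: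
  fixes g :: "(real^'m::finite^'n::finite) measure" and i :: 'n
  assumes e: "\<epsilon> > 0" and pg: "prob_space g" and sg: "sets g = sets borel"
    and lp: "lipschitz_private \<epsilon> blocknorm (additive_mech g)"
    and A1: "(\<integral>\<^sup>+ v. ennreal (norm (v $ i)) \<partial>g) = ennreal a" and a0: "a \<ge> 0"
    and A2: "(\<integral>\<^sup>+ v. ennreal (norm (v $ i) ^ 2) \<partial>g) = ennreal a2" and a20: "a2 \<ge> 0"
  shows "real CARD('m) \<le> \<epsilon> * a"
    and "(real CARD('m) + 1) * a \<le> \<epsilon> * a2"
proof -
  note approx = private_block_moment_inequalities[OF e pg sg lp _ A1 a0 A2 a20]
  show "real CARD('m) \<le> \<epsilon> * a"
  proof (rule tendsto_le[OF trivial_limit_at_right_real])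
    show "((\<lambda>\<delta>. \<epsilon> * (a + \<delta>)) \<longlongrightarrow> \<epsilon> * a) (at_right 0)"
      by (auto intro!: tendsto_eq_intros)
    show "eventually (\<lambda>\<delta>. real CARD('m) \<le> \<epsilon> * (a + \<delta>)) (at_right 0)"
      using eventually_at_right_less by (rule eventually_mono) (rule approx(1))
  qed simp
  show "(real CARD('m) + 1) * a \<le> \<epsilon> * a2"
  proof (rule tendsto_le[OF trivial_limit_at_right_real])
    show "((\<lambda>\<delta>. \<epsilon> * (a2 + 2 * \<delta> * a + \<delta>^2)) \<longlongrightarrow> \<epsilon> * a2) (at_right 0)"
      by (auto intro!: tendsto_eq_intros)
    show "((\<lambda>\<delta>. (real CARD('m) + 1) * (a - \<delta>)) \<longlongrightarrow> (real CARD('m) + 1) * a) (at_right 0)"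
      by (auto intro!: tendsto_eq_intros)
    show "eventually (\<lambda>\<delta>. (real CARD('m) + 1) * (a - \<delta>) \<le> \<epsilon> * (a2 + 2 * \<delta> * a + \<delta>^2)) (at_right 0)"
      using eventually_at_right_less by (rule eventually_mono) (rule approx(2))
  qed
qed

lemma private_second_block_moment_ge:
  fixes \<epsilon> :: real and g :: "(real^'m::finite^'n::finite) measure" and i :: 'n
  assumes e: "\<epsilon> > 0" and pg: "prob_space g" and sg: "sets g = sets borel"
    and lp: "lipschitz_private \<epsilon> blocknorm (additive_mech g)"
  shows "ennreal (real CARD('m) * (real CARD('m) + 1) / \<epsilon> ^ 2) \<le> (\<integral>\<^sup>+ v. ennreal (norm (v $ i) ^ 2) \<partial>g)"
proof (cases "(\<integral>\<^sup>+ v. ennreal (norm (v $ i) ^ 2) \<partial>g) = \<infinity>")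
  case False
  interpret g: prob_space g by fact
  have [measurable]: "(\<lambda>v. norm (v $ i)) \<in> borel_measurable g"
    by (subst measurable_cong_sets[OF sg refl]) measurable
  obtain a2 where A2: "(\<integral>\<^sup>+ v. ennreal (norm (v $ i) ^ 2) \<partial>g) = ennreal a2" and a20: "a2 \<ge> 0"
    using False by (cases "\<integral>\<^sup>+ v. ennreal (norm (v $ i) ^ 2) \<partial>g") auto
  have "(\<integral>\<^sup>+ v. ennreal (norm (v $ i)) \<partial>g) \<le> (\<integral>\<^sup>+ v. 1 + ennreal (norm (v $ i) ^ 2) \<partial>g)"
  proof (intro nn_integral_mono)
    fix v :: "real^'m^'n"
    show "ennreal (norm (v $ i)) \<le> 1 + ennreal (norm (v $ i) ^ 2)"
      using le_one_plus_power2[of "norm (v $ i)"]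
      by (metis ennreal_1 ennreal_leI ennreal_plus norm_ge_zero zero_le_one zero_le_power)
  qed
  also have "\<dots> = ennreal (1 + a2)"
    using A2 a20 by (simp add: nn_integral_add g.emeasure_space_1)
  finally obtain a where A1: "(\<integral>\<^sup>+ v. ennreal (norm (v $ i)) \<partial>g) = ennreal a" and a0: "a \<ge> 0"
    by (cases "\<integral>\<^sup>+ v. ennreal (norm (v $ i)) \<partial>g") (auto simp: top_unique)
  note first_moments = private_first_moment_inequalities[OF e pg sg lp A1 a0 A2 a20]
  have "real CARD('m) * (real CARD('m) + 1) \<le> \<epsilon> * a * (real CARD('m) + 1)"
    and "\<epsilon> * ((real CARD('m) + 1) * a) \<le> \<epsilon> * (\<epsilon> * a2)"
    using first_moments e by (auto intro: mult_right_mono mult_left_mono)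
  then have "real CARD('m) * (real CARD('m) + 1) \<le> \<epsilon> ^ 2 * a2"
    by (simp add: power2_eq_square algebra_simps)
  then have "real CARD('m) * (real CARD('m) + 1) / \<epsilon> ^ 2 \<le> a2"
    using e by (simp add: divide_le_eq mult.commute)
  then show ?thesis
    unfolding A2 by (rule ennreal_leI)
qed simp

lemma private_second_moment_ge:
  fixes \<epsilon> :: real and g :: "(real^'m::finite^'n::finite) measure"
  assumes e: "\<epsilon> > 0" and pg: "prob_space g" and sg: "sets g = sets borel"
    and lp: "lipschitz_private \<epsilon> blocknorm (additive_mech g)"
  shows "(\<integral>\<^sup>+ v. ennreal (norm v ^ 2) \<partial>g) \<ge> ennreal (real CARD('n) * real CARD('m) * (real CARD('m) + 1) / \<epsilon> ^ 2)"
proof -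
  have "(\<integral>\<^sup>+ v. ennreal (norm v ^ 2) \<partial>g) = (\<integral>\<^sup>+ v. (\<Sum>i\<in>UNIV. ennreal (norm (v $ i) ^ 2)) \<partial>g)"
    by (intro nn_integral_cong) (simp add: power2_norm_vec_eq_sum)
  also have "\<dots> = (\<Sum>i\<in>UNIV. (\<integral>\<^sup>+ v. ennreal (norm (v $ i) ^ 2) \<partial>g))"
    by (rule nn_integral_sum) (subst measurable_cong_sets[OF sg refl], measurable)
  also have "\<dots> \<ge> (\<Sum>i\<in>(UNIV::'n set). ennreal (real CARD('m) * (real CARD('m) + 1) / \<epsilon> ^ 2))"
    by (intro sum_mono private_second_block_moment_ge[OF e pg sg lp])
  finally show ?thesis
    by (simp add: ennreal_of_nat_eq_real_of_nat ennreal_mult[symmetric] mult.assoc)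
qed

theorem theorem4:
  fixes \<epsilon> :: real and g :: "(real^'m^'n) measure"
  assumes "\<epsilon> > 0"
    and "prob_space g"
    and "sets g = sets borel"
    and "lipschitz_private \<epsilon> blocknorm (additive_mech g)"
  shows "prob_space (density lborel (\<lambda>v::real^'m^'n. ennreal (lap_density \<epsilon> v)))
    \<and> (\<integral>\<^sup>+ v. ennreal (norm v ^ 2) \<partial>g)
        \<ge> (\<integral>\<^sup>+ v. ennreal (norm v ^ 2 * lap_density \<epsilon> v) \<partial>(lborel :: (real^'m^'n) measure))
    \<and> (\<integral>\<^sup>+ v. ennreal (norm v ^ 2 * lap_density \<epsilon> v) \<partial>(lborel :: (real^'m^'n) measure))
        = ennreal (real CARD('n) * real CARD('m) * (real CARD('m) + 1) / \<epsilon> ^ 2)"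
proof -
  have "(\<integral>\<^sup>+ v. ennreal (norm v ^ 2 * lap_density \<epsilon> v) \<partial>(lborel :: (real^'m^'n) measure))
      = ennreal (real CARD('n) * real CARD('m) * (real CARD('m) + 1) / \<epsilon> ^ 2)"
    by (rule nn_integral_norm_sq_lap_density[OF assms(1)])
  then show ?thesis
    using prob_space_lap_density[OF assms(1)] private_second_moment_ge[OF assms] by simp
qed

end
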